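(* Let $D$ be an integral domain and $D\subseteq T\subseteq S$ overrings of $D$. (b) Let $\star,\star',\star''$ be semistar operations on $D,T,S$ respectively. If $S$ is $(\star',\star'')$-flat over $T$ and $T$ is $(\star,\star')$-flat over $D$, then $S$ is $(\star,\star'')$-flat over $D$. (e) Let $\star_1,\star_2$ be semistar operations on $D$ with $(\star_1)_f\le(\star_2)_f$ and $\star'$ a semistar operation on $T$. If $T$ is $(\star_2,\star')$-flat over $D$, then $T$ is $(\star_1,\star')$-flat over $D$. In particular, if $\star$ is a semistar operation on $D$ with $D^\star=D$, then $T$ is $t$-flat over $(D,\star)$ if and only if $T$ is $t$-flat over $D$. (h) Let $\star,\star',\star''$ be semistar operations on $D,T,S$ respectively, and assume $S$ is $(\star,\star'')$-flat over $D$. Then $S$ is $(\star',\star'')$-flat over $T$ if and only if $S$ is $(\star',\star'')$-linked to $T$.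
   Context: Let $D$ be an integral domain with quotient field $K$. $\overline{\mathbf F}(D)$ denotes the set of all nonzero $D$-submodules of $K$ and $\mathbf f(D)$ the set of nonzero finitely generated $D$-submodules of $K$. A semistar operation on $D$ is a map $\star:\overline{\mathbf F}(D)\to\overline{\mathbf F}(D)$, $E\mapsto E^\star$, such that for all $0\ne x\in K$ and $E,F\in\overline{\mathbf F}(D)$: (1) $(xE)^\star=xE^\star$; (2) $E\subseteq F\Rightarrow E^\star\subseteq F^\star$; (3) $E\subseteq E^\star$ and $(E^\star)^\star=E^\star$. $\star_1\le\star_2$ means $E^{\star_1}\subseteq E^{\star_2}$ for all $E$. $\star_f$ is defined by $E^{\star_f}=\bigcup\{F^\star:F\in\mathbf f(D),F\subseteq E\}$. A nonzero ideal $I$ of $D$ is a quasi-$\star$-ideal if $I^\star\cap D=I$; a quasi-$\star$-prime is a prime quasi-$\star$-ideal. An overring of $D$ is a ring $T$ with $D\subseteq T\subseteq K$; all notions are defined analogously on $T$ (and on overrings of $T$ relative to $T$). For an overring $T$, $v_T$ is $E\mapsto(T:_K(T:_KE))$ and $t_T:=(v_T)_f$. $T$ is $(\star,\star')$-linked to $D$ if for every nonzero finitely generated ideal $F\subseteq D$ with $F^\star=D^\star$ one has $(FT)^{\star'}=T^{\star'}$. $T$ is $(\star,\star')$-flat over $D$ if $T$ is $(\star,\star')$-linked to $D$ and $D_{Q\cap D}=T_Q$ for every quasi-$\star'_f$-prime ideal $Q$ of $T$. $T$ is $t$-flat over $(D,\star)$ if it is $(\star,t_T)$-flat over $D$, and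 $t$-flat over $D$ if it is $(t_D,t_T)$-flat over $D$. *)

theory Defs
  imports Main
begin

text \<open>Convention: the quotient field K of D is the whole type 'a (a field).
  Rings D, T, S are subsets of 'a; D-submodules of K are subsets of 'a.\<close>

definition subring :: "'a::field set \<Rightarrow> bool" where
  "subring R \<longleftrightarrow> 0 \<in> R \<and> 1 \<in> R \<and> (\<forall>x\<in>R. \<forall>y\<in>R. x + y \<in> R \<and> x - y \<in> R \<and> x * y \<in> R)"

definition quotient_field_is_UNIV :: "'a::field set \<Rightarrow> bool" where
  "quotient_field_is_UNIV D \<longleftrightarrow> (\<forall>x. \<exists>a\<in>D. \<exists>b\<in>D. b \<noteq> 0 \<and> x = a / b)"

definition overring :: "'a::field set \<Rightarrow> 'a set \<Rightarrow> bool" where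
  "overring D T \<longleftrightarrow> subring T \<and> D \<subseteq> T"

definition is_submod :: "'a::field set \<Rightarrow> 'a set \<Rightarrow> bool" where
  "is_submod R E \<longleftrightarrow> 0 \<in> E \<and> (\<forall>x\<in>E. \<forall>y\<in>E. x + y \<in> E) \<and> (\<forall>r\<in>R. \<forall>x\<in>E. r * x \<in> E)"

definition Fbar :: "'a::field set \<Rightarrow> 'a set set" where
  "Fbar R = {E. is_submod R E \<and> E \<noteq> {0}}"

definition generated :: "'a::field set \<Rightarrow> 'a set \<Rightarrow> 'a set" where
  "generated R X = \<Inter>{E. is_submod R E \<and> X \<subseteq> E}"

definition ffg :: "'a::field set \<Rightarrow> 'a set set" where
  "ffg R = {F. (\<exists>G. finite G \<and> F = generated R G) \<and> F \<noteq> {0}}"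

definition semistar :: "'a::field set \<Rightarrow> ('a set \<Rightarrow> 'a set) \<Rightarrow> bool" where
  "semistar R st \<longleftrightarrow>
     (\<forall>E\<in>Fbar R. st E \<in> Fbar R) \<and>
     (\<forall>E\<in>Fbar R. \<forall>x. x \<noteq> 0 \<longrightarrow> st ((\<lambda>y. x * y) ` E) = (\<lambda>y. x * y) ` st E) \<and>
     (\<forall>E\<in>Fbar R. \<forall>F\<in>Fbar R. E \<subseteq> F \<longrightarrow> st E \<subseteq> st F) \<and>
     (\<forall>E\<in>Fbar R. E \<subseteq> st E \<and> st (st E) = st E)"

definition star_le :: "'a::field set \<Rightarrow> ('a set \<Rightarrow> 'a set) \<Rightarrow> ('a set \<Rightarrow> 'a set) \<Rightarrow> bool" where
  "star_le R st1 st2 \<longleftrightarrow> (\<forall>E\<in>Fbar R. st1 E \<subseteq> st2 E)"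

definition star_f :: "'a::field set \<Rightarrow> ('a set \<Rightarrow> 'a set) \<Rightarrow> 'a set \<Rightarrow> 'a set" where
  "star_f R st E = \<Union>{st F | F. F \<in> ffg R \<and> F \<subseteq> E}"

definition colon :: "'a::field set \<Rightarrow> 'a set \<Rightarrow> 'a set" where
  "colon T E = {x. \<forall>e\<in>E. x * e \<in> T}"

definition v_op :: "'a::field set \<Rightarrow> 'a set \<Rightarrow> 'a set" where
  "v_op T E = colon T (colon T E)"

definition t_op :: "'a::field set \<Rightarrow> 'a set \<Rightarrow> 'a set" where
  "t_op T = star_f T (v_op T)"

definition prime_ideal :: "'a::field set \<Rightarrow> 'a set \<Rightarrow> bool" where
  "prime_ideal R P \<longleftrightarrow> P \<subseteq> R \<and> is_submod R P \<and> P \<noteq> R \<and>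
     (\<forall>a\<in>R. \<forall>b\<in>R. a * b \<in> P \<longrightarrow> a \<in> P \<or> b \<in> P)"

definition quasi_prime :: "'a::field set \<Rightarrow> ('a set \<Rightarrow> 'a set) \<Rightarrow> 'a set \<Rightarrow> bool" where
  "quasi_prime R st Q \<longleftrightarrow> prime_ideal R Q \<and> Q \<noteq> {0} \<and> st Q \<inter> R = Q"

definition loc :: "'a::field set \<Rightarrow> 'a set \<Rightarrow> 'a set" where
  "loc R P = {a / s | a s. a \<in> R \<and> s \<in> R \<and> s \<notin> P}"

definition linked :: "'a::field set \<Rightarrow> 'a set \<Rightarrow> ('a set \<Rightarrow> 'a set) \<Rightarrow> ('a set \<Rightarrow> 'a set) \<Rightarrow> bool" where
  "linked D T st st' \<longleftrightarrow>
     (\<forall>F\<in>ffg D. F \<subseteq> D \<longrightarrow> st F = st D \<longrightarrow> st' (generated T F) = st' T)"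

definition flat :: "'a::field set \<Rightarrow> 'a set \<Rightarrow> ('a set \<Rightarrow> 'a set) \<Rightarrow> ('a set \<Rightarrow> 'a set) \<Rightarrow> bool" where
  "flat D T st st' \<longleftrightarrow> linked D T st st' \<and>
     (\<forall>Q. quasi_prime T (star_f T st') Q \<longrightarrow> loc D (Q \<inter> D) = loc T Q)"

end

theory Submission
  imports Defs
begin

text \<open>
  (b) Linkedness composes. For a quasi-\<open>\<star>''\<close>-prime \<open>Q\<close> of \<open>S\<close>, linkedness of \<open>S\<close> over \<open>T\<close>
  shows that no finitely generated ideal inside \<open>Q \<inter> T\<close> has 1 in its \<open>\<star>'\<close>-closure, so by
  Zorn's lemma \<open>Q \<inter> T\<close> lies in a quasi-\<open>\<star>'\<^sub>f\<close>-prime \<open>M\<close> of \<open>T\<close>. Flatness of \<open>T\<close> gives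
  \<open>T \<subseteq> T\<^sub>M = D\<^bsub>M\<inter>D\<^esub> \<subseteq> D\<^bsub>Q\<inter>D\<^esub>\<close>, hence \<open>T\<^bsub>Q\<inter>T\<^esub> = D\<^bsub>Q\<inter>D\<^esub>\<close>, and flatness of \<open>S\<close> over \<open>T\<close>
  finishes the argument.

  (e) If \<open>F\<^sup>\<star>\<^sup>1 = D\<^sup>\<star>\<^sup>1\<close> for finitely generated \<open>F\<close>, then \<open>1 \<in> F\<^sup>\<star>\<^sup>2\<close>, so \<open>F\<^sup>\<star>\<^sup>2 = D\<^sup>\<star>\<^sup>2\<close>.
  If \<open>D\<^sup>\<star> = D\<close>, then \<open>F\<^sup>\<star> = D\<close> forces \<open>(D : F) = D\<close>, i.e. \<open>F\<^sup>t = D\<close>. Conversely, if \<open>F\<^sup>t = D\<close>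
  but some \<open>y \<in> (T : FT)\<close> lies outside \<open>T\<close>, the ideal \<open>{t \<in> T. t y \<in> T}\<close> is contained in a
  quasi-\<open>t\<close>-prime \<open>M\<close> of \<open>T\<close>; clearing denominators in \<open>T\<^sub>M = D\<^bsub>M\<inter>D\<^esub>\<close> gives \<open>s \<in> D - M\<close> with
  \<open>s y \<in> (D : F) = D \<subseteq> T\<close>, so \<open>s \<in> M\<close>, a contradiction.

  (h) Localizations only grow along \<open>D \<subseteq> T \<subseteq> S\<close>, so \<open>D\<^bsub>Q\<inter>D\<^esub> = S\<^sub>Q\<close> squeezes \<open>T\<^bsub>Q\<inter>T\<^esub>\<close>.
\<close>

section \<open>Submodules and generated submodules\<close>

lemma is_submod_zero: "is_submod R E \<Longrightarrow> 0 \<in> E"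
  unfolding is_submod_def by auto

lemma is_submod_add: "is_submod R E \<Longrightarrow> x \<in> E \<Longrightarrow> y \<in> E \<Longrightarrow> x + y \<in> E"
  unfolding is_submod_def by auto

lemma is_submod_mult: "is_submod R E \<Longrightarrow> r \<in> R \<Longrightarrow> x \<in> E \<Longrightarrow> r * x \<in> E"
  unfolding is_submod_def by auto

lemma is_submod_subring_mono: "is_submod S E \<Longrightarrow> R \<subseteq> S \<Longrightarrow> is_submod R E"
  unfolding is_submod_def by auto

lemma is_submod_Int: "is_submod R E \<Longrightarrow> is_submod R F \<Longrightarrow> is_submod R (E \<inter> F)"
  unfolding is_submod_def by auto

lemma is_submod_preimage_mult: "is_submod R E \<Longrightarrow> is_submod R {y. c * y \<in> E}"
  unfolding is_submod_def by (simp add: distrib_left mult.left_commute)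

lemma is_submod_image_mult:
  assumes E: "is_submod R E"
  shows "is_submod R ((*) c ` E)"
  unfolding is_submod_def
proof (intro conjI ballI)
  show "0 \<in> (*) c ` E"
    using is_submod_zero[OF E] by (metis image_eqI mult_zero_right)
next
  fix u v assume "u \<in> (*) c ` E" "v \<in> (*) c ` E"
  then obtain x y where "x \<in> E" "y \<in> E" "u = c * x" "v = c * y"
    by blast
  then show "u + v \<in> (*) c ` E"
    using is_submod_add[OF E] by (metis distrib_left image_eqI)
next
  fix r u assume "r \<in> R" "u \<in> (*) c ` E"
  then obtain x where "x \<in> E" "u = c * x"
    by blast
  then show "r * u \<in> (*) c ` E"
    using is_submod_mult[OF E \<open>r \<in> R\<close>] by (metis mult.left_commute image_eqI)
qed

lemma is_submod_Union_chain:
  assumes C: "C \<noteq> {}" "subset.chain \<A> C" and sub: "\<And>B. B \<in> C \<Longrightarrow> is_submod R B"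
  shows "is_submod R (\<Union>C)"
  unfolding is_submod_def
proof (intro conjI ballI)
  show "0 \<in> \<Union>C"
    using C(1) sub is_submod_zero by blast
next
  fix x y assume "x \<in> \<Union>C" "y \<in> \<Union>C"
  then obtain I J where "I \<in> C" "J \<in> C" "x \<in> I" "y \<in> J"
    by blast
  moreover have "I \<subseteq> J \<or> J \<subseteq> I"
    using C(2) \<open>I \<in> C\<close> \<open>J \<in> C\<close> unfolding subset.chain_def by blast
  ultimately show "x + y \<in> \<Union>C"
    using sub is_submod_add by (metis UnionI subsetD)
next
  fix r x assume "r \<in> R" "x \<in> \<Union>C"
  then show "r * x \<in> \<Union>C"
    using sub is_submod_mult by blast
qed

lemma subring_is_submod: "subring R \<Longrightarrow> is_submod R R"
  unfolding subring_def is_submod_def by auto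

lemma subring_one: "subring R \<Longrightarrow> 1 \<in> R"
  unfolding subring_def by auto

lemma subring_zero: "subring R \<Longrightarrow> 0 \<in> R"
  unfolding subring_def by auto

lemma subring_mult: "subring R \<Longrightarrow> x \<in> R \<Longrightarrow> y \<in> R \<Longrightarrow> x * y \<in> R"
  unfolding subring_def by auto

lemma FbarI: "is_submod R E \<Longrightarrow> x \<in> E \<Longrightarrow> x \<noteq> 0 \<Longrightarrow> E \<in> Fbar R"
  unfolding Fbar_def by auto

lemma Fbar_is_submod: "E \<in> Fbar R \<Longrightarrow> is_submod R E"
  unfolding Fbar_def by auto

lemma Fbar_nonzero:
  assumes "E \<in> Fbar R" obtains x where "x \<in> E" "x \<noteq> 0"
  using assms is_submod_zero unfolding Fbar_def by blast

lemma is_submod_generated: "is_submod R (generated R X)"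
  unfolding generated_def is_submod_def by auto

lemma generated_superset: "X \<subseteq> generated R X"
  unfolding generated_def by auto

lemma generated_least: "is_submod R E \<Longrightarrow> X \<subseteq> E \<Longrightarrow> generated R X \<subseteq> E"
  unfolding generated_def by auto

lemma generated_mono: "X \<subseteq> Y \<Longrightarrow> generated R X \<subseteq> generated R Y"
  by (meson generated_least is_submod_generated generated_superset order_trans)

lemma generated_subring_mono: "T \<subseteq> S \<Longrightarrow> generated T X \<subseteq> generated S X"
  by (meson generated_least generated_superset is_submod_generated is_submod_subring_mono)

lemma generated_generated: "T \<subseteq> S \<Longrightarrow> generated S (generated T X) = generated S X"
proof
  assume "T \<subseteq> S"
  then show "generated S (generated T X) \<subseteq> generated S X"
    by (intro generated_least is_submod_generated generated_subring_mono)
  show "generated S X \<subseteq> generated S (generated T X)"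
    by (intro generated_mono generated_superset)
qed

lemma generated_one: "subring R \<Longrightarrow> generated R {1} = R"
proof
  assume R: "subring R"
  show "generated R {1} \<subseteq> R"
    by (rule generated_least[OF subring_is_submod[OF R]]) (simp add: subring_one[OF R])
  show "R \<subseteq> generated R {1}"
  proof
    fix r assume "r \<in> R"
    then have "r * 1 \<in> generated R {1}"
      by (intro is_submod_mult[OF is_submod_generated]) (auto intro: subsetD[OF generated_superset])
    then show "r \<in> generated R {1}"
      by simp
  qed
qed

lemma image_mult_generated_subset: "(*) c ` generated R X \<subseteq> generated R ((*) c ` X)"
proof -
  have "X \<subseteq> {y. c * y \<in> generated R ((*) c ` X)}"
    using generated_superset[of "(*) c ` X" R] by blast
  then have "generated R X \<subseteq> {y. c * y \<in> generated R ((*) c ` X)}"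
    by (intro generated_least is_submod_preimage_mult is_submod_generated)
  then show ?thesis
    by blast
qed

lemma mem_generated_finite:
  assumes "y \<in> generated R X"
  shows "\<exists>X'. finite X' \<and> X' \<subseteq> X \<and> y \<in> generated R X'"
proof -
  let ?U = "{y. \<exists>X'. finite X' \<and> X' \<subseteq> X \<and> y \<in> generated R X'}"
  have "is_submod R ?U"
    unfolding is_submod_def
  proof (intro conjI ballI)
    show "0 \<in> ?U"
      using is_submod_zero[OF is_submod_generated] by blast
  next
    fix u v assume "u \<in> ?U" "v \<in> ?U"
    then obtain U V where "finite U" "U \<subseteq> X" "u \<in> generated R U"
      and "finite V" "V \<subseteq> X" "v \<in> generated R V" by blast
    then have "u + v \<in> generated R (U \<union> V)"
      using generated_mono[of U "U \<union> V" R] generated_mono[of V "U \<union> V" R]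
      by (intro is_submod_add[OF is_submod_generated]) auto
    with \<open>finite U\<close> \<open>finite V\<close> \<open>U \<subseteq> X\<close> \<open>V \<subseteq> X\<close> show "u + v \<in> ?U"
      by (intro CollectI exI[of _ "U \<union> V"]) simp
  next
    fix r u assume "r \<in> R" "u \<in> ?U"
    then show "r * u \<in> ?U"
      using is_submod_mult[OF is_submod_generated] by blast
  qed
  moreover have "X \<subseteq> ?U"
  proof
    fix x assume "x \<in> X"
    then show "x \<in> ?U"
      using generated_superset[of "{x}" R] by (intro CollectI exI[of _ "{x}"]) auto
  qed
  ultimately have "generated R X \<subseteq> ?U"
    by (rule generated_least)
  then show ?thesis
    using assms by blast
qed

lemma finite_subset_generated:
  assumes "finite G" "G \<subseteq> generated R X"
  shows "\<exists>X'. finite X' \<and> X' \<subseteq> X \<and> G \<subseteq> generated R X'"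
  using assms
proof (induction G rule: finite_induct)
  case empty
  then show ?case by blast
next
  case (insert g G)
  then obtain X1 X2 where "finite X1" "X1 \<subseteq> X" "G \<subseteq> generated R X1"
    and "finite X2" "X2 \<subseteq> X" "g \<in> generated R X2"
    using mem_generated_finite[of g R X] by auto
  then show ?case
    using generated_mono[of X1 "X1 \<union> X2" R] generated_mono[of X2 "X1 \<union> X2" R]
    by (intro exI[of _ "X1 \<union> X2"]) auto
qed

section \<open>Semistar operations and finite type\<close>

lemma semistar_Fbar: "semistar R st \<Longrightarrow> E \<in> Fbar R \<Longrightarrow> st E \<in> Fbar R"
  unfolding semistar_def by auto

lemma semistar_is_submod: "semistar R st \<Longrightarrow> E \<in> Fbar R \<Longrightarrow> is_submod R (st E)"
  using semistar_Fbar Fbar_is_submod by blast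

lemma semistar_mono: "semistar R st \<Longrightarrow> E \<in> Fbar R \<Longrightarrow> F \<in> Fbar R \<Longrightarrow> E \<subseteq> F \<Longrightarrow> st E \<subseteq> st F"
  unfolding semistar_def by auto

lemma semistar_extensive: "semistar R st \<Longrightarrow> E \<in> Fbar R \<Longrightarrow> E \<subseteq> st E"
  unfolding semistar_def by auto

lemma semistar_idem: "semistar R st \<Longrightarrow> E \<in> Fbar R \<Longrightarrow> st (st E) = st E"
  unfolding semistar_def by auto

lemma semistar_image_mult:
  "semistar R st \<Longrightarrow> E \<in> Fbar R \<Longrightarrow> x \<noteq> 0 \<Longrightarrow> st ((*) x ` E) = (*) x ` st E"
  unfolding semistar_def by auto

lemma semistar_subset_closure:
  assumes "semistar R st" "E \<in> Fbar R" "F \<in> Fbar R" "E \<subseteq> st F"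
  shows "st E \<subseteq> st F"
  by (metis assms semistar_Fbar semistar_idem semistar_mono)

lemma semistar_eq_ring_if_one_mem:
  assumes R: "subring R" and st: "semistar R st"
    and F: "F \<in> Fbar R" "F \<subseteq> R" and one: "1 \<in> st F"
  shows "st F = st R"
proof
  have RF: "R \<in> Fbar R"
    using FbarI[OF subring_is_submod[OF R] subring_one[OF R]] by simp
  show "st F \<subseteq> st R"
    using semistar_mono[OF st F(1) RF F(2)] .
  have "R \<subseteq> st F"
    using is_submod_mult[OF semistar_is_submod[OF st F(1)] _ one] by force
  then show "st R \<subseteq> st F"
    using semistar_subset_closure[OF st RF F(1)] by blast
qed

lemma ffgE:
  assumes "F \<in> ffg R"
  obtains G where "finite G" "F = generated R G" "F \<noteq> {0}"
  using assms unfolding ffg_def by blast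

lemma ffg_Fbar: "F \<in> ffg R \<Longrightarrow> F \<in> Fbar R"
  unfolding ffg_def Fbar_def using is_submod_generated by auto

lemma generated_in_ffg: "finite G \<Longrightarrow> x \<in> G \<Longrightarrow> x \<noteq> 0 \<Longrightarrow> generated R G \<in> ffg R"
  unfolding ffg_def using generated_superset by blast

lemma ring_in_ffg: "subring R \<Longrightarrow> R \<in> ffg R"
  by (metis generated_in_ffg generated_one finite.emptyI finite.insertI insertI1 one_neq_zero)

lemma generated_in_ffg_mono:
  "finite G' \<Longrightarrow> G \<subseteq> G' \<Longrightarrow> generated R G \<in> ffg R \<Longrightarrow> generated R G' \<in> ffg R"
  unfolding ffg_def using generated_mono[of G G' R] is_submod_zero[OF is_submod_generated] by blast

lemma generated_in_ffg_of_ffg: "T \<subseteq> S \<Longrightarrow> F \<in> ffg T \<Longrightarrow> generated S F \<in> ffg S"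
proof -
  assume TS: "T \<subseteq> S" and F: "F \<in> ffg T"
  obtain G where G: "finite G" "F = generated T G" "F \<noteq> {0}"
    using F by (rule ffgE)
  then obtain x where "x \<in> F" "x \<noteq> 0"
    using is_submod_zero[OF is_submod_generated] by blast
  then have "generated S F \<noteq> {0}"
    using generated_superset by blast
  then show ?thesis
    unfolding ffg_def using G generated_generated[OF TS] by auto
qed

lemma ffg_subset_generated_insert:
  assumes F: "F \<in> ffg R" "F \<subseteq> generated R (insert x M)"
  shows "\<exists>H. finite H \<and> H \<subseteq> M \<and> F \<subseteq> generated R (insert x H)"
proof -
  obtain G where G: "finite G" "F = generated R G" "F \<noteq> {0}"
    using F(1) by (rule ffgE)
  have "G \<subseteq> generated R (insert x M)"
    using F(2) generated_superset unfolding G(2) by blast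
  then obtain X where X: "finite X" "X \<subseteq> insert x M" "G \<subseteq> generated R X"
    by (metis finite_subset_generated[OF G(1)])
  have "generated R X \<subseteq> generated R (insert x (X - {x}))"
    by (intro generated_mono) blast
  then have "F \<subseteq> generated R (insert x (X - {x}))"
    unfolding G(2) using X(3) by (intro generated_least is_submod_generated) blast
  moreover have "finite (X - {x})" "X - {x} \<subseteq> M"
    using X(1,2) by auto
  ultimately show ?thesis
    by (intro exI[of _ "X - {x}"]) simp
qed

lemma star_fI: "x \<in> st F \<Longrightarrow> F \<in> ffg R \<Longrightarrow> F \<subseteq> E \<Longrightarrow> x \<in> star_f R st E"
  unfolding star_f_def by blast

lemma star_fE:
  assumes "x \<in> star_f R st E"
  obtains F where "x \<in> st F" "F \<in> ffg R" "F \<subseteq> E"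
  using assms unfolding star_f_def by blast

lemma star_f_ffg: "semistar R st \<Longrightarrow> F \<in> ffg R \<Longrightarrow> star_f R st F = st F"
  unfolding star_f_def using ffg_Fbar semistar_mono by fastforce

lemma star_f_star_f: "star_f R (star_f R st) = star_f R st"
proof (intro ext equalityI subsetI)
  fix E x assume "x \<in> star_f R (star_f R st) E"
  then obtain F G where "x \<in> st G" "G \<in> ffg R" "G \<subseteq> F" "F \<subseteq> E"
    by (metis star_fE)
  then show "x \<in> star_f R st E"
    by (blast intro: star_fI)
next
  fix E x assume "x \<in> star_f R st E"
  then obtain F where "x \<in> st F" "F \<in> ffg R" "F \<subseteq> E"
    by (rule star_fE)
  then show "x \<in> star_f R (star_f R st) E"
    by (blast intro: star_fI)
qed

lemma subset_star_f:
  assumes st: "semistar R st" and E: "E \<in> Fbar R"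
  shows "E \<subseteq> star_f R st E"
proof
  fix x assume x: "x \<in> E"
  obtain e where e: "e \<in> E" "e \<noteq> 0"
    using E by (rule Fbar_nonzero)
  let ?F = "generated R {x, e}"
  have F: "?F \<in> ffg R"
    using e by (intro generated_in_ffg) auto
  moreover have "?F \<subseteq> E"
    using x e by (intro generated_least Fbar_is_submod[OF E]) auto
  moreover have "x \<in> st ?F"
    using semistar_extensive[OF st ffg_Fbar[OF F]] generated_superset by blast
  ultimately show "x \<in> star_f R st E"
    by (blast intro: star_fI)
qed

lemma mem_star_f_Union_chain:
  assumes x: "x \<in> star_f R st (\<Union>C)" and C: "C \<noteq> {}" "subset.chain \<A> C"
    and sub: "\<And>B. B \<in> C \<Longrightarrow> is_submod R B"
  shows "\<exists>B\<in>C. x \<in> star_f R st B"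
proof -
  obtain F where F: "x \<in> st F" "F \<in> ffg R" "F \<subseteq> \<Union>C"
    using x by (rule star_fE)
  then obtain G where G: "finite G" "F = generated R G"
    by (blast elim: ffgE)
  then have "G \<subseteq> \<Union>C"
    using F(3) generated_superset by blast
  then obtain B where "B \<in> C" "G \<subseteq> B"
    using finite_subset_Union_chain[OF G(1) _ C] by blast
  then have "F \<subseteq> B"
    using G(2) generated_least sub by blast
  then show ?thesis
    using F \<open>B \<in> C\<close> by (blast intro: star_fI)
qed

section \<open>The v- and t-operations\<close>

lemma colon_antimono: "E \<subseteq> E' \<Longrightarrow> colon T E' \<subseteq> colon T E"
  unfolding colon_def by blast

lemma is_submod_colon: "subring T \<Longrightarrow> is_submod T (colon T E)"
  unfolding is_submod_def colon_def
  by (auto simp: distrib_right mult.assoc intro: subring_zero subring_mult)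
    (metis subring_def)

lemma colon_ring: "subring R \<Longrightarrow> colon R R = R"
  unfolding colon_def using subring_one subring_mult by force

lemma colon_generated: "subring R \<Longrightarrow> colon R (generated R X) = colon R X"
proof
  assume R: "subring R"
  show "colon R (generated R X) \<subseteq> colon R X"
    by (intro colon_antimono generated_superset)
  show "colon R X \<subseteq> colon R (generated R X)"
  proof
    fix z assume "z \<in> colon R X"
    then have "generated R X \<subseteq> {e. z * e \<in> R}"
      unfolding colon_def
      by (intro generated_least is_submod_preimage_mult subring_is_submod[OF R]) blast
    then show "z \<in> colon R (generated R X)"
      unfolding colon_def by blast
  qed
qed

lemma colon_image_mult:
  fixes x :: "'a::field"
  assumes "x \<noteq> 0"
  shows "colon T ((*) x ` E) = (*) (inverse x) ` colon T E"
proof -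
  have "z \<in> colon T ((*) x ` E) \<longleftrightarrow> x * z \<in> colon T E" for z
    unfolding colon_def by (simp add: ac_simps)
  moreover have "z \<in> (*) (inverse x) ` A \<longleftrightarrow> x * z \<in> A" for z and A :: "'a set"
    using assms by (auto simp: image_iff field_simps intro: bexI[of _ "x * z"])
  ultimately show ?thesis
    by blast
qed

lemma subset_v_op: "E \<subseteq> v_op T E"
  unfolding v_op_def colon_def by (auto simp: mult.commute)

lemma v_op_mono: "E \<subseteq> E' \<Longrightarrow> v_op T E \<subseteq> v_op T E'"
  unfolding v_op_def by (intro colon_antimono)

lemma colon_v_op: "colon T (v_op T E) = colon T E"
  by (metis colon_antimono subset_antisym subset_v_op v_op_def)

lemma v_op_idem: "v_op T (v_op T E) = v_op T E"
  unfolding v_op_def[of T "v_op T E"] colon_v_op by (simp add: v_op_def)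

lemma v_op_image_mult: "(x::'a::field) \<noteq> 0 \<Longrightarrow> v_op T ((*) x ` E) = (*) x ` v_op T E"
  unfolding v_op_def by (simp add: colon_image_mult)

lemma v_op_ring: "subring R \<Longrightarrow> v_op R R = R"
  unfolding v_op_def by (simp add: colon_ring)

lemma semistar_v_op:
  assumes T: "subring T"
  shows "semistar T (v_op T)"
proof -
  have "v_op T E \<in> Fbar T" if E: "E \<in> Fbar T" for E
  proof -
    obtain e where "e \<in> E" "e \<noteq> 0"
      using E by (rule Fbar_nonzero)
    then show ?thesis
      using subset_v_op[of E T] is_submod_colon[OF T] unfolding v_op_def
      by (blast intro: FbarI)
  qed
  then show ?thesis
    unfolding semistar_def
    by (simp add: v_op_image_mult v_op_mono subset_v_op v_op_idem)
qed

lemma t_op_ffg: "subring R \<Longrightarrow> F \<in> ffg R \<Longrightarrow> t_op R F = v_op R F"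
  unfolding t_op_def using star_f_ffg semistar_v_op by blast

lemma t_op_ring: "subring R \<Longrightarrow> t_op R R = R"
  by (simp add: t_op_ffg ring_in_ffg v_op_ring)

lemma t_op_eq_ring_iff_colon:
  assumes R: "subring R" and F: "F \<in> ffg R" "F \<subseteq> R"
  shows "t_op R F = R \<longleftrightarrow> colon R F \<subseteq> R"
proof -
  have "R \<subseteq> colon R F"
    using colon_antimono[OF F(2)] colon_ring[OF R] by blast
  then show ?thesis
    using colon_v_op[of R F] v_op_ring[OF R] colon_ring[OF R]
    unfolding t_op_ffg[OF R F(1)] v_op_def
    by (metis subset_antisym)
qed

section \<open>Localizations and quasi-primes\<close>

lemma loc_mono: "A \<subseteq> B \<Longrightarrow> (\<And>s. s \<in> A \<Longrightarrow> s \<notin> P \<Longrightarrow> s \<notin> Q) \<Longrightarrow> loc A P \<subseteq> loc B Q"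
  unfolding loc_def by blast

lemma mem_loc: "subring R \<Longrightarrow> 1 \<notin> P \<Longrightarrow> a \<in> R \<Longrightarrow> a \<in> loc R P"
  unfolding loc_def using subring_one by (intro CollectI exI[of _ a] exI[of _ 1]) auto

lemma loc_eq_if_subset_loc:
  assumes D: "subring D" and DT: "D \<subseteq> T" and P0: "0 \<in> P"
    and prime: "\<And>a b. a \<in> T \<Longrightarrow> b \<in> T \<Longrightarrow> a * b \<in> P \<Longrightarrow> a \<in> P \<or> b \<in> P"
    and T: "T \<subseteq> loc D (P \<inter> D)"
  shows "loc T P = loc D (P \<inter> D)"
proof
  show "loc D (P \<inter> D) \<subseteq> loc T P"
    using DT by (intro loc_mono) auto
  show "loc T P \<subseteq> loc D (P \<inter> D)"
  proof
    fix z assume "z \<in> loc T P"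
    then obtain a s where as: "z = a / s" "a \<in> T" "s \<in> T" "s \<notin> P"
      unfolding loc_def by blast
    obtain a1 b1 where ab1: "a = a1 / b1" "a1 \<in> D" "b1 \<in> D" "b1 \<notin> P"
      using as(2) T unfolding loc_def by blast
    obtain a2 b2 where ab2: "s = a2 / b2" "a2 \<in> D" "b2 \<in> D" "b2 \<notin> P"
      using as(3) T unfolding loc_def by blast
    have "b2 \<noteq> 0"
      using ab2(4) P0 by blast
    then have "a2 = s * b2"
      using ab2(1) by simp
    then have a2: "a2 \<notin> P" "a2 \<noteq> 0"
      using prime[of s b2] as(3,4) ab2(3,4) DT P0 by auto
    have "b1 * a2 \<notin> P"
      using prime[of b1 a2] ab1(3,4) ab2(2) a2(1) DT by auto
    moreover have "b1 * a2 \<in> D" "a1 * b2 \<in> D"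
      using subring_mult[OF D] ab1 ab2 by auto
    moreover have "z = (a1 * b2) / (b1 * a2)"
      using as(1) ab1(1) ab2(1) \<open>b2 \<noteq> 0\<close> a2(2) P0 ab1(4) by (auto simp: field_simps)
    ultimately show "z \<in> loc D (P \<inter> D)"
      unfolding loc_def by blast
  qed
qed

lemma common_denominator:
  assumes D: "subring D" and P1: "1 \<notin> P"
    and mult: "\<And>a b. a \<in> D \<Longrightarrow> b \<in> D \<Longrightarrow> a \<notin> P \<Longrightarrow> b \<notin> P \<Longrightarrow> a * b \<notin> P"
    and X: "finite X" "X \<subseteq> loc D P"
  shows "\<exists>s\<in>D. s \<notin> P \<and> (\<forall>x\<in>X. s * x \<in> D)"
  using X
proof (induction X rule: finite_induct)
  case empty
  then show ?case
    using subring_one[OF D] P1 by blast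
next
  case (insert x X)
  then obtain s where s: "s \<in> D" "s \<notin> P" "\<forall>y\<in>X. s * y \<in> D"
    by auto
  obtain a t where at: "x = a / t" "a \<in> D" "t \<in> D" "t \<notin> P"
    using insert.prems unfolding loc_def by blast
  have "s * t * x \<in> D"
    using at s subring_mult[OF D] subring_zero[OF D] by (cases "t = 0") auto
  moreover have "s * t * y \<in> D" if "y \<in> X" for y
    using subring_mult[OF D at(3) bspec[OF s(3) that]] by (simp add: ac_simps)
  ultimately show ?case
    using s at mult subring_mult[OF D] by (intro bexI[of _ "s * t"]) auto
qed

lemma quasi_primeD:
  assumes "quasi_prime R st Q"
  shows "Q \<subseteq> R" "is_submod R Q" "Q \<noteq> R" "Q \<noteq> {0}" "st Q \<inter> R = Q"
    "\<And>a b. a \<in> R \<Longrightarrow> b \<in> R \<Longrightarrow> a * b \<in> Q \<Longrightarrow> a \<in> Q \<or> b \<in> Q"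
  using assms unfolding quasi_prime_def prime_ideal_def by auto

lemma one_notin_quasi_prime:
  assumes "subring R" "quasi_prime R st Q"
  shows "1 \<notin> Q"
  using is_submod_mult[OF quasi_primeD(2)[OF assms(2)], of _ 1] quasi_primeD(1,3)[OF assms(2)]
  by force

lemma exists_nonzero_mem_subring:
  assumes "quotient_field_is_UNIV D" "D \<subseteq> S" "is_submod S Q" "Q \<noteq> {0}"
  shows "\<exists>a\<in>D. a \<in> Q \<and> a \<noteq> 0"
proof -
  obtain q where q: "q \<in> Q" "q \<noteq> 0"
    using assms(3,4) is_submod_zero by blast
  obtain a b where ab: "a \<in> D" "b \<in> D" "b \<noteq> 0" "q = a / b"
    using assms(1) unfolding quotient_field_is_UNIV_def by blast
  then have "b * q = a" "a \<noteq> 0"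
    using q(2) by auto
  moreover have "b * q \<in> Q"
    using is_submod_mult[OF assms(3) _ q(1)] ab(2) assms(2) by blast
  ultimately show ?thesis
    using ab(1) by auto
qed

section \<open>Quasi-primes from maximal ideals\<close>

definition star_f_maximal :: "'a::field set \<Rightarrow> ('a set \<Rightarrow> 'a set) \<Rightarrow> 'a set \<Rightarrow> bool" where
  "star_f_maximal T st M \<longleftrightarrow> is_submod T M \<and> M \<subseteq> T \<and> 1 \<notin> star_f T st M \<and>
     (\<forall>I. is_submod T I \<longrightarrow> I \<subseteq> T \<longrightarrow> M \<subseteq> I \<longrightarrow> 1 \<notin> star_f T st I \<longrightarrow> I = M)"

lemma star_f_maximalD:
  assumes "star_f_maximal T st M"
  shows "is_submod T M" "M \<subseteq> T" "1 \<notin> star_f T st M" "0 \<in> M"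
    "\<And>I. is_submod T I \<Longrightarrow> I \<subseteq> T \<Longrightarrow> M \<subseteq> I \<Longrightarrow> 1 \<notin> star_f T st I \<Longrightarrow> I = M"
  using assms is_submod_zero[of T M] unfolding star_f_maximal_def by simp_all

lemma star_f_maximal_escape:
  assumes T: "subring T" and st: "semistar T st" and M: "star_f_maximal T st M"
    and x: "x \<in> T" "x \<notin> M"
  shows "\<exists>H. finite H \<and> H \<subseteq> M \<and> 1 \<in> st (generated T (insert x H))"
proof -
  let ?N = "generated T (insert x M)"
  have N: "?N \<subseteq> T" "M \<subseteq> ?N" "x \<in> ?N"
    using generated_least[OF subring_is_submod[OF T], of "insert x M"] x(1) star_f_maximalD(2)[OF M]
      generated_superset[of "insert x M" T] by auto
  have "1 \<in> star_f T st ?N"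
  proof (rule ccontr)
    assume "1 \<notin> star_f T st ?N"
    then have "?N = M"
      by (rule star_f_maximalD(5)[OF M is_submod_generated N(1,2)])
    with N(3) x(2) show False
      by simp
  qed
  then obtain F where F: "1 \<in> st F" "F \<in> ffg T" "F \<subseteq> ?N"
    by (rule star_fE)
  obtain H where H: "finite H" "H \<subseteq> M" "F \<subseteq> generated T (insert x H)"
    using ffg_subset_generated_insert[OF F(2,3)] by blast
  have "generated T (insert x H) \<in> Fbar T"
    using x(2) star_f_maximalD(4)[OF M] H(1) by (intro ffg_Fbar generated_in_ffg[of _ x]) auto
  then have "1 \<in> st (generated T (insert x H))"
    using semistar_mono[OF st ffg_Fbar[OF F(2)] _ H(3)] F(1) by blast
  with H(1,2) show ?thesis
    by blast
qed

text \<open>Otherwise the finite set that \<open>star_f_maximal_escape\<close> provides for \<open>x\<close>, together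
  with \<open>G\<close>, would generate an ideal inside \<open>M\<close> whose closure contains 1.\<close>

lemma star_f_maximal_closed:
  assumes T: "subring T" and st: "semistar T st" and M: "star_f_maximal T st M"
    and G: "finite G" "G \<subseteq> M" "generated T G \<in> ffg T"
    and x: "x \<in> st (generated T G)" "x \<in> T"
  shows "x \<in> M"
proof (rule ccontr)
  assume "x \<notin> M"
  then obtain H where H: "finite H" "H \<subseteq> M" "1 \<in> st (generated T (insert x H))"
    using star_f_maximal_escape[OF T st M x(2)] by blast
  let ?U = "generated T (G \<union> H)"
  have U: "?U \<in> ffg T"
    by (rule generated_in_ffg_mono[OF _ _ G(3)]) (use G(1) H(1) in auto)
  have "st (generated T G) \<subseteq> st ?U"
    by (rule semistar_mono[OF st ffg_Fbar[OF G(3)] ffg_Fbar[OF U] generated_mono]) blast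
  moreover have "H \<subseteq> st ?U"
    using generated_superset[of "G \<union> H" T] semistar_extensive[OF st ffg_Fbar[OF U]] by blast
  ultimately have "generated T (insert x H) \<subseteq> st ?U"
    using x(1) by (intro generated_least semistar_is_submod[OF st ffg_Fbar[OF U]]) blast
  moreover have "generated T (insert x H) \<in> Fbar T"
    using \<open>x \<notin> M\<close> star_f_maximalD(4)[OF M] H(1) by (intro ffg_Fbar generated_in_ffg[of _ x]) auto
  ultimately have "1 \<in> st ?U"
    using semistar_subset_closure[OF st _ ffg_Fbar[OF U]] H(3) by blast
  moreover have "?U \<subseteq> M"
    using G(2) H(2) by (intro generated_least star_f_maximalD(1)[OF M]) blast
  ultimately have "1 \<in> star_f T st M"
    using star_fI[of 1 st ?U T M] U by blast
  with star_f_maximalD(3)[OF M] show False ..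
qed

lemma star_f_maximal_prime:
  assumes T: "subring T" and st: "semistar T st" and M: "star_f_maximal T st M"
    and ab: "a \<in> T" "b \<in> T" "a * b \<in> M"
  shows "a \<in> M \<or> b \<in> M"
proof (rule ccontr)
  assume "\<not> (a \<in> M \<or> b \<in> M)"
  then have a: "a \<notin> M" "a \<noteq> 0" and b: "b \<notin> M" "b \<noteq> 0"
    using star_f_maximalD(4)[OF M] by auto
  obtain H where H: "finite H" "H \<subseteq> M" "1 \<in> st (generated T (insert a H))"
    using star_f_maximal_escape[OF T st M ab(1) a(1)] by blast
  let ?A = "generated T (insert a H)"
  let ?X = "(*) b ` insert a H"
  have XM: "?X \<subseteq> M"
    using ab(3) H(2) is_submod_mult[OF star_f_maximalD(1)[OF M] ab(2)] by (auto simp: mult.commute)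
  have X: "generated T ?X \<in> ffg T"
    using a(2) b(2) H(1) by (intro generated_in_ffg[of _ "b * a"]) auto
  have A: "?A \<in> Fbar T"
    using a(2) H(1) by (intro ffg_Fbar generated_in_ffg[of _ a]) auto
  have "(*) b ` ?A \<in> Fbar T"
    using a(2) b(2) generated_superset[of "insert a H" T]
    by (intro FbarI[of _ _ "b * a"] is_submod_image_mult is_submod_generated) auto
  then have "st ((*) b ` ?A) \<subseteq> st (generated T ?X)"
    using semistar_mono[OF st _ ffg_Fbar[OF X] image_mult_generated_subset] by blast
  moreover have "b * 1 \<in> (*) b ` st ?A"
    using H(3) by blast
  then have "b \<in> st ((*) b ` ?A)"
    by (simp add: semistar_image_mult[OF st A b(2)])
  ultimately have "b \<in> M"
    using H(1) by (intro star_f_maximal_closed[OF T st M _ XM X _ ab(2)]) auto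
  with b(1) show False ..
qed

lemma quasi_prime_if_star_f_maximal:
  assumes T: "subring T" and st: "semistar T st" and M: "star_f_maximal T st M"
    and M0: "M \<noteq> {0}"
  shows "quasi_prime T (star_f T st) M"
proof -
  note M' = star_f_maximalD[OF M]
  have closed: "star_f T st M \<inter> T \<subseteq> M"
  proof
    fix x assume x: "x \<in> star_f T st M \<inter> T"
    obtain F where F: "x \<in> st F" "F \<in> ffg T" "F \<subseteq> M"
      using IntD1[OF x] by (rule star_fE)
    obtain G where G: "finite G" "F = generated T G" "F \<noteq> {0}"
      using F(2) by (rule ffgE)
    have "G \<subseteq> M"
      using F(3) generated_superset unfolding G(2) by blast
    then show "x \<in> M"
      using star_f_maximal_closed[OF T st M G(1) _ _ _ IntD2[OF x]] F(1,2) unfolding G(2) by blast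
  qed
  have "M \<subseteq> star_f T st M"
    using M'(1,4) M0 by (intro subset_star_f[OF st]) (auto simp: Fbar_def)
  then have "M \<noteq> T"
    using M'(3) subring_one[OF T] by blast
  moreover have "star_f T st M \<inter> T = M"
    using closed \<open>M \<subseteq> star_f T st M\<close> M'(2) by blast
  ultimately show ?thesis
    unfolding quasi_prime_def prime_ideal_def
    using M'(1,2) M0 star_f_maximal_prime[OF T st M] by blast
qed

lemma exists_quasi_prime_above:
  assumes T: "subring T" and st: "semistar T st"
    and P: "is_submod T P" "P \<subseteq> T" "P \<noteq> {0}" "1 \<notin> star_f T st P"
  shows "\<exists>M. quasi_prime T (star_f T st) M \<and> P \<subseteq> M"
proof -
  define \<A> where "\<A> = {I. is_submod T I \<and> I \<subseteq> T \<and> P \<subseteq> I \<and> 1 \<notin> star_f T st I}"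
  have "\<exists>M\<in>\<A>. \<forall>I\<in>\<A>. M \<subseteq> I \<longrightarrow> I = M"
  proof (rule subset_Zorn_nonempty)
    show "\<A> \<noteq> {}"
      using P unfolding \<A>_def by blast
  next
    fix C assume C: "C \<noteq> {}" "subset.chain \<A> C"
    then have sub: "\<And>I. I \<in> C \<Longrightarrow> is_submod T I \<and> I \<subseteq> T \<and> P \<subseteq> I \<and> 1 \<notin> star_f T st I"
      unfolding subset.chain_def \<A>_def by blast
    have "is_submod T (\<Union>C)"
      using C sub by (intro is_submod_Union_chain) blast+
    moreover have "1 \<notin> star_f T st (\<Union>C)"
      using mem_star_f_Union_chain[OF _ C] sub by blast
    ultimately show "\<Union>C \<in> \<A>"
      using C(1) sub unfolding \<A>_def by blast
  qed
  then obtain M where "M \<in> \<A>" and max: "\<And>I. I \<in> \<A> \<Longrightarrow> M \<subseteq> I \<Longrightarrow> I = M"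
    by blast
  then have M: "is_submod T M" "M \<subseteq> T" "P \<subseteq> M" "1 \<notin> star_f T st M"
    unfolding \<A>_def by blast+
  have "I = M" if "is_submod T I" "I \<subseteq> T" "M \<subseteq> I" "1 \<notin> star_f T st I" for I
    using max[of I] that M(3) unfolding \<A>_def by blast
  then have "star_f_maximal T st M"
    unfolding star_f_maximal_def using M(1,2,4) by blast
  moreover have "M \<noteq> {0}"
    using P(1,3) M(3) is_submod_zero by blast
  ultimately have "quasi_prime T (star_f T st) M"
    by (rule quasi_prime_if_star_f_maximal[OF T st])
  with M(3) show ?thesis
    by blast
qed

section \<open>Linkedness and flatness\<close>

definition loc_agree :: "'a::field set \<Rightarrow> 'a set \<Rightarrow> ('a set \<Rightarrow> 'a set) \<Rightarrow> bool" where
  "loc_agree D T st' \<longleftrightarrow> (\<forall>Q. quasi_prime T (star_f T st') Q \<longrightarrow> loc D (Q \<inter> D) = loc T Q)"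

lemma flat_iff: "flat D T st st' \<longleftrightarrow> linked D T st st' \<and> loc_agree D T st'"
  unfolding flat_def loc_agree_def ..

lemma linked_trans:
  assumes T: "subring T" and DT: "D \<subseteq> T" and TS: "T \<subseteq> S"
    and DT_lk: "linked D T st st'" and TS_lk: "linked T S st' st''"
  shows "linked D S st st''"
  unfolding linked_def
proof (intro ballI impI)
  fix F assume F: "F \<in> ffg D" "F \<subseteq> D" "st F = st D"
  then have "st' (generated T F) = st' T"
    using DT_lk unfolding linked_def by blast
  moreover have "generated T F \<in> ffg T" "generated T F \<subseteq> T"
    using generated_in_ffg_of_ffg[OF DT F(1)] generated_least[OF subring_is_submod[OF T]] F(2) DT
    by auto
  ultimately have "st'' (generated S (generated T F)) = st'' S"
    using TS_lk unfolding linked_def by blast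
  then show "st'' (generated S F) = st'' S"
    by (simp add: generated_generated[OF TS])
qed

lemma exists_quasi_prime_above_contraction:
  assumes T: "subring T" and S: "subring S" and TS: "T \<subseteq> S"
    and st': "semistar T st'" and st'': "semistar S st''" and lk: "linked T S st' st''"
    and Q: "quasi_prime S (star_f S st'') Q" and QT: "Q \<inter> T \<noteq> {0}"
  shows "\<exists>M. quasi_prime T (star_f T st') M \<and> Q \<inter> T \<subseteq> M"
proof (rule exists_quasi_prime_above[OF T st'])
  show "is_submod T (Q \<inter> T)"
    using is_submod_Int[OF is_submod_subring_mono[OF quasi_primeD(2)[OF Q] TS]
        subring_is_submod[OF T]] .
  show "1 \<notin> star_f T st' (Q \<inter> T)"
  proof
    assume "1 \<in> star_f T st' (Q \<inter> T)"
    then obtain F where F: "1 \<in> st' F" "F \<in> ffg T" "F \<subseteq> Q \<inter> T"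
      by (rule star_fE)
    then have "st' F = st' T"
      by (intro semistar_eq_ring_if_one_mem[OF T st'] ffg_Fbar) auto
    then have "st'' (generated S F) = st'' S"
      using lk F(2,3) unfolding linked_def by blast
    then have "1 \<in> st'' (generated S F)"
      using semistar_extensive[OF st'' ffg_Fbar[OF ring_in_ffg[OF S]]] subring_one[OF S] by blast
    moreover have "generated S F \<in> ffg S"
      by (rule generated_in_ffg_of_ffg[OF TS F(2)])
    moreover have "generated S F \<subseteq> Q"
      using F(3) by (intro generated_least quasi_primeD(2)[OF Q]) blast
    ultimately have "1 \<in> star_f S st'' Q \<inter> S"
      using star_fI[of 1 st'' "generated S F" S Q] subring_one[OF S] by blast
    then show False
      using quasi_primeD(5)[OF Q] one_notin_quasi_prime[OF S Q] by blast
  qed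
qed (use QT in auto)

lemma loc_agree_trans:
  assumes D: "subring D" and qf: "quotient_field_is_UNIV D"
    and T: "subring T" and S: "subring S" and DT: "D \<subseteq> T" and TS: "T \<subseteq> S"
    and st': "semistar T st'" and st'': "semistar S st''" and lk: "linked T S st' st''"
    and TS_agree: "loc_agree T S st''" and DT_agree: "loc_agree D T st'"
  shows "loc_agree D S st''"
  unfolding loc_agree_def
proof (intro allI impI)
  fix Q assume Q: "quasi_prime S (star_f S st'') Q"
  have "Q \<inter> T \<noteq> {0}"
    using exists_nonzero_mem_subring[OF qf _ quasi_primeD(2,4)[OF Q]] DT TS by blast
  then obtain M where M: "quasi_prime T (star_f T st') M" "Q \<inter> T \<subseteq> M"
    using exists_quasi_prime_above_contraction[OF T S TS st' st'' lk Q] by blast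
  have "T \<subseteq> loc T M"
    using mem_loc[OF T one_notin_quasi_prime[OF T M(1)]] by blast
  also have "\<dots> = loc D (M \<inter> D)"
    using DT_agree M(1) unfolding loc_agree_def by simp
  also have "\<dots> \<subseteq> loc D (Q \<inter> D)"
    using M(2) DT by (intro loc_mono) auto
  finally have T_loc: "T \<subseteq> loc D (Q \<inter> D)" .
  have QTD: "Q \<inter> T \<inter> D = Q \<inter> D"
    using DT by blast
  have "loc T (Q \<inter> T) = loc D (Q \<inter> T \<inter> D)"
  proof (rule loc_eq_if_subset_loc[OF D DT])
    show "0 \<in> Q \<inter> T"
      using is_submod_zero[OF quasi_primeD(2)[OF Q]] subring_zero[OF T] by blast
    show "a \<in> Q \<inter> T \<or> b \<in> Q \<inter> T" if "a \<in> T" "b \<in> T" "a * b \<in> Q \<inter> T" for a b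
      using quasi_primeD(6)[OF Q] that TS by blast
    show "T \<subseteq> loc D (Q \<inter> T \<inter> D)"
      using T_loc by (simp only: QTD)
  qed
  then have "loc D (Q \<inter> D) = loc T (Q \<inter> T)"
    by (simp only: QTD)
  also have "\<dots> = loc S Q"
    using TS_agree Q unfolding loc_agree_def by blast
  finally show "loc D (Q \<inter> D) = loc S Q" .
qed

lemma loc_agree_intermediate:
  assumes "D \<subseteq> T" "T \<subseteq> S" "loc_agree D S st''"
  shows "loc_agree T S st''"
  unfolding loc_agree_def
proof (intro allI impI)
  fix Q assume "quasi_prime S (star_f S st'') Q"
  then have "loc D (Q \<inter> D) = loc S Q"
    using assms(3) unfolding loc_agree_def by blast
  moreover have "loc D (Q \<inter> D) \<subseteq> loc T (Q \<inter> T)" "loc T (Q \<inter> T) \<subseteq> loc S Q"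
    using assms(1,2) by (intro loc_mono; auto)+
  ultimately show "loc T (Q \<inter> T) = loc S Q"
    by blast
qed

lemma linked_star_f_le:
  assumes D: "subring D" and st1: "semistar D st1" and st2: "semistar D st2"
    and le: "star_le D (star_f D st1) (star_f D st2)" and lk: "linked D T st2 st'"
  shows "linked D T st1 st'"
  unfolding linked_def
proof (intro ballI impI)
  fix F assume F: "F \<in> ffg D" "F \<subseteq> D" "st1 F = st1 D"
  have "1 \<in> st1 F"
    using F(3) semistar_extensive[OF st1 ffg_Fbar[OF ring_in_ffg[OF D]]] subring_one[OF D] by blast
  then have "1 \<in> st2 F"
    using le ffg_Fbar[OF F(1)] star_f_ffg[OF st1 F(1)] star_f_ffg[OF st2 F(1)]
    unfolding star_le_def by blast
  then have "st2 F = st2 D"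
    using semistar_eq_ring_if_one_mem[OF D st2 ffg_Fbar[OF F(1)] F(2)] by blast
  then show "st' (generated T F) = st' T"
    using lk F(1,2) unfolding linked_def by blast
qed

lemma exists_quasi_t_prime_above_denominators:
  assumes qf: "quotient_field_is_UNIV D" and T: "subring T" and DT: "D \<subseteq> T"
    and yT: "y \<notin> T"
  shows "\<exists>M. quasi_prime T (star_f T (t_op T)) M \<and> T \<inter> {t. y * t \<in> T} \<subseteq> M"
proof -
  let ?J = "T \<inter> {t. y * t \<in> T}"
  have J: "is_submod T ?J" "?J \<subseteq> T"
    using is_submod_Int[OF subring_is_submod[OF T] is_submod_preimage_mult[OF subring_is_submod[OF T]]]
    by auto
  obtain a b where ab: "a \<in> D" "b \<in> D" "b \<noteq> 0" "y = a / b"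
    using qf unfolding quotient_field_is_UNIV_def by blast
  then have "b \<in> ?J"
    using DT by auto
  then have "?J \<noteq> {0}"
    using ab(3) by blast
  moreover have "1 \<notin> star_f T (v_op T) ?J"
  proof
    assume "1 \<in> star_f T (v_op T) ?J"
    then obtain F where F: "1 \<in> v_op T F" "F \<in> ffg T" "F \<subseteq> ?J"
      by (rule star_fE)
    then have "y \<in> colon T F"
      unfolding colon_def by (auto simp: mult.commute)
    then have "1 * y \<in> T"
      using F(1) unfolding v_op_def colon_def[of T "colon T F"] by blast
    with yT show False
      by simp
  qed
  moreover have "star_f T (t_op T) = star_f T (v_op T)"
    unfolding t_op_def by (rule star_f_star_f)
  ultimately show ?thesis
    using exists_quasi_prime_above[OF T semistar_v_op[OF T] J] by simp
qed

lemma colon_extension_subset_of_loc_agree: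
  assumes D: "subring D" and qf: "quotient_field_is_UNIV D"
    and T: "subring T" and DT: "D \<subseteq> T" and agree: "loc_agree D T (t_op T)"
    and F: "F \<in> ffg D" "colon D F \<subseteq> D"
  shows "colon T (generated T F) \<subseteq> T"
proof
  fix y assume y: "y \<in> colon T (generated T F)"
  show "y \<in> T"
  proof (rule ccontr)
    assume "y \<notin> T"
    then obtain M where M: "quasi_prime T (star_f T (t_op T)) M" "T \<inter> {t. y * t \<in> T} \<subseteq> M"
      using exists_quasi_t_prime_above_denominators[OF qf T DT] by blast
    have "T \<subseteq> loc T M"
      using mem_loc[OF T one_notin_quasi_prime[OF T M(1)]] by blast
    then have T_loc: "T \<subseteq> loc D (M \<inter> D)"
      using agree M(1) unfolding loc_agree_def by simp
    obtain G where G: "finite G" "F = generated D G" "F \<noteq> {0}"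
      using F(1) by (rule ffgE)
    have "G \<subseteq> generated T F"
      using G(2) generated_superset[of G D] generated_superset[of F T] by blast
    then have "(*) y ` G \<subseteq> T"
      using y unfolding colon_def by blast
    then have yG: "(*) y ` G \<subseteq> loc D (M \<inter> D)"
      using T_loc by blast
    have M1: "1 \<notin> M \<inter> D"
      using one_notin_quasi_prime[OF T M(1)] by blast
    have mult: "a * b \<notin> M \<inter> D"
      if "a \<in> D" "b \<in> D" "a \<notin> M \<inter> D" "b \<notin> M \<inter> D" for a b
      using quasi_primeD(6)[OF M(1)] that DT by blast
    obtain s where s: "s \<in> D" "s \<notin> M \<inter> D" "\<forall>x\<in>(*) y ` G. s * x \<in> D"
      using common_denominator[OF D M1 mult finite_imageI[OF G(1)] yG] by blast
    then have "s * y \<in> colon D G"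
      unfolding colon_def by (simp add: mult.assoc)
    then have "s * y \<in> D"
      using F(2) unfolding G(2) colon_generated[OF D] by blast
    then have "s \<in> T \<inter> {t. y * t \<in> T}"
      using s(1) DT by (auto simp: mult.commute)
    with M(2) s(1,2) show False
      by blast
  qed
qed

lemma linked_t_op_of_loc_agree:
  assumes D: "subring D" and qf: "quotient_field_is_UNIV D"
    and T: "subring T" and DT: "D \<subseteq> T" and agree: "loc_agree D T (t_op T)"
  shows "linked D T (t_op D) (t_op T)"
  unfolding linked_def
proof (intro ballI impI)
  fix F assume F: "F \<in> ffg D" "F \<subseteq> D" "t_op D F = t_op D D"
  then have "colon D F \<subseteq> D"
    using t_op_eq_ring_iff_colon[OF D] t_op_ring[OF D] by simp
  then have "colon T (generated T F) \<subseteq> T"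
    by (rule colon_extension_subset_of_loc_agree[OF D qf T DT agree F(1)])
  moreover have "generated T F \<in> ffg T" "generated T F \<subseteq> T"
    using generated_in_ffg_of_ffg[OF DT F(1)] generated_least[OF subring_is_submod[OF T]] F(2) DT
    by auto
  ultimately show "t_op T (generated T F) = t_op T T"
    using t_op_eq_ring_iff_colon[OF T] t_op_ring[OF T] by simp
qed

lemma linked_of_linked_t_op:
  assumes D: "subring D" and st: "semistar D st" and stD: "st D = D"
    and lk: "linked D T (t_op D) st'"
  shows "linked D T st st'"
  unfolding linked_def
proof (intro ballI impI)
  fix F assume F: "F \<in> ffg D" "F \<subseteq> D" "st F = st D"
  have "z \<in> D" if z: "z \<in> colon D F" for z
  proof (cases "z = 0")
    case True
    then show ?thesis
      using subring_zero[OF D] by simp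
  next
    case False
    have zF: "(*) z ` F \<subseteq> D"
      using z unfolding colon_def by blast
    obtain f where "f \<in> F" "f \<noteq> 0"
      using ffg_Fbar[OF F(1)] by (rule Fbar_nonzero)
    then have "z * f \<in> (*) z ` F" "z * f \<noteq> 0"
      using False by auto
    then have "(*) z ` F \<in> Fbar D"
      by (rule FbarI[OF is_submod_image_mult[OF Fbar_is_submod[OF ffg_Fbar[OF F(1)]]]])
    then have "(*) z ` st F \<subseteq> D"
      using semistar_mono[OF st _ ffg_Fbar[OF ring_in_ffg[OF D]] zF] stD
        semistar_image_mult[OF st ffg_Fbar[OF F(1)] False] by simp
    moreover have "1 \<in> st F"
      using F(3) stD subring_one[OF D] by simp
    ultimately have "z * 1 \<in> D"
      by blast
    then show "z \<in> D"
      by simp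
  qed
  then have "t_op D F = t_op D D"
    using t_op_eq_ring_iff_colon[OF D F(1,2)] t_op_ring[OF D] by blast
  then show "st' (generated T F) = st' T"
    using lk F(1,2) unfolding linked_def by blast
qed

theorem lemma4p2:
  fixes D T S :: "'a::field set"
  assumes "subring D" and "quotient_field_is_UNIV D"
    and "overring D T" and "overring T S"
  shows "(\<forall>st st' st''. semistar D st \<longrightarrow> semistar T st' \<longrightarrow> semistar S st'' \<longrightarrow>
            flat T S st' st'' \<longrightarrow> flat D T st st' \<longrightarrow> flat D S st st'')
       \<and> (\<forall>st1 st2 st'. semistar D st1 \<longrightarrow> semistar D st2 \<longrightarrow> semistar T st' \<longrightarrow>
            star_le D (star_f D st1) (star_f D st2) \<longrightarrow>
            flat D T st2 st' \<longrightarrow> flat D T st1 st')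
       \<and> (\<forall>st. semistar D st \<longrightarrow> st D = D \<longrightarrow>
            (flat D T st (t_op T) \<longleftrightarrow> flat D T (t_op D) (t_op T)))
       \<and> (\<forall>st st' st''. semistar D st \<longrightarrow> semistar T st' \<longrightarrow> semistar S st'' \<longrightarrow>
            flat D S st st'' \<longrightarrow> (flat T S st' st'' \<longleftrightarrow> linked T S st' st''))"
proof -
  note D = assms(1) and qf = assms(2)
  have T: "subring T" and S: "subring S" and DT: "D \<subseteq> T" and TS: "T \<subseteq> S"
    using assms(3,4) unfolding overring_def by auto
  have transitive: "flat D S st st''"
    if "semistar T st'" "semistar S st''" "flat T S st' st''" "flat D T st st'" for st st' st''
    using that linked_trans[OF T DT TS] loc_agree_trans[OF D qf T S DT TS]
    unfolding flat_iff by blast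
  have antitone: "flat D T st1 st'"
    if "semistar D st1" "semistar D st2" "star_le D (star_f D st1) (star_f D st2)"
      and "flat D T st2 st'" for st1 st2 st'
    using that linked_star_f_le[OF D] unfolding flat_iff by blast
  have t_flat: "flat D T st (t_op T) \<longleftrightarrow> flat D T (t_op D) (t_op T)"
    if "semistar D st" "st D = D" for st
    using that linked_t_op_of_loc_agree[OF D qf T DT] linked_of_linked_t_op[OF D]
    unfolding flat_iff by blast
  have intermediate: "flat T S st' st'' \<longleftrightarrow> linked T S st' st''"
    if "flat D S st st''" for st st' st''
    using that loc_agree_intermediate[OF DT TS] unfolding flat_iff by blast
  show ?thesis
    using transitive antitone t_flat intermediate by blast
qed

end
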